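(* Let $n$ be an odd positive integer and let $p^a$ be a prime power dividing $n$ ($p$ prime, $a\ge1$). Suppose there is a prime $q$ with $n/3<q<n/2$ and $n-2q<p^a$. Then for every integer $k$ with $1\le k\le n-1$, $\binom{n}{k}$ is divisible by $p$ or by $q$. *)

theory Defs
  imports Complex_Main "HOL-Computational_Algebra.Primes"
begin

end

theory Submission
  imports Defs
begin

(* Write d = p^a. If p does not divide (n choose k), then d divides k, because
   k (n choose k) = n (n-1 choose k-1), and hence also n - k. As n is odd, 2k - n is a nonzero
   multiple of d, so |2k - n| >= d > n - 2q, i.e. k < q or n - k < q; by symmetry k < q. Since
   also k >= d > n - 2q, we get q <= n - k < 2q, so q^2 divides n! but not k! (n-k)!, and q
   divides (n choose k). *)

lemma prime_power_dvd_index_if_not_dvd_choose: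
  fixes p a n k :: nat
  assumes "prime p" "p ^ a dvd n" "0 < k" "\<not> p dvd (n choose k)"
  shows "p ^ a dvd k"
proof -
  have "k * (n choose k) = n * ((n - 1) choose (k - 1))"
    using times_binomial_minus1_eq[OF \<open>0 < k\<close>] .
  then have "p ^ a dvd k * (n choose k)"
    using \<open>p ^ a dvd n\<close> by (metis dvd_mult2)
  moreover have "coprime (p ^ a) (n choose k)"
    using assms(1,4) by (simp add: prime_imp_coprime)
  ultimately show ?thesis
    using coprime_dvd_mult_left_iff by blast
qed

lemma prime_square_dvd_fact:
  fixes q n :: nat
  assumes "prime q" "2 * q \<le> n"
  shows "q ^ 2 dvd fact n"
proof -
  have "q dvd fact q"
    using prime_dvd_fact_iff[OF \<open>prime q\<close>] by simp
  then have "q ^ 2 dvd fact q * fact q"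
    by (simp add: power2_eq_square mult_dvd_mono)
  also have "\<dots> dvd fact (q + q)"
    by (rule fact_fact_dvd_fact)
  also have "\<dots> dvd fact n"
    using \<open>2 * q \<le> n\<close> by (simp add: fact_dvd)
  finally show ?thesis .
qed

lemma prime_square_not_dvd_fact:
  fixes q m :: nat
  assumes "prime q" "m < 2 * q"
  shows "\<not> q ^ 2 dvd fact m"
  using \<open>m < 2 * q\<close>
proof (induction m)
  case 0
  then show ?case
    using prime_gt_1_nat[OF \<open>prime q\<close>] by simp
next
  case (Suc m)
  consider "Suc m < q" | "Suc m = q" | "q < Suc m"
    by linarith
  then show ?case
  proof cases
    case 1
    then have "\<not> q dvd fact (Suc m)"
      using prime_dvd_fact_iff[OF \<open>prime q\<close>] by (simp del: fact_Suc)
    then show ?thesis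
      by (meson dvd_power dvd_trans zero_less_numeral)
  next
    case 2
    have "\<not> q dvd fact m"
      using prime_dvd_fact_iff[OF \<open>prime q\<close>] 2 by simp
    moreover have "fact (Suc m) = q * fact m"
      using 2 by (metis fact_Suc of_nat_id)
    ultimately show ?thesis
      using prime_gt_0_nat[OF \<open>prime q\<close>] by (simp add: power2_eq_square)
  next
    case 3
    have "Suc m = q + (Suc m - q)" "0 < Suc m - q" "Suc m - q < q"
      using 3 Suc.prems by linarith+
    then have "\<not> q dvd Suc m"
      by (metis dvd_add_right_iff dvd_refl nat_dvd_not_less)
    then have "coprime (q ^ 2) (Suc m)"
      using \<open>prime q\<close> by (simp add: prime_imp_coprime)
    moreover have "fact (Suc m) = Suc m * fact m"
      by (metis fact_Suc of_nat_id)
    ultimately show ?thesis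
      using Suc by (metis coprime_dvd_mult_right_iff Suc_lessD)
  qed
qed

lemma prime_dvd_choose_if_index_below:
  fixes q n k :: nat
  assumes "prime q" "2 * q \<le> n" "k < q" "n - k < 2 * q"
  shows "q dvd (n choose k)"
proof (rule ccontr)
  assume "\<not> q dvd (n choose k)"
  moreover have "\<not> q dvd fact k"
    using prime_dvd_fact_iff[OF \<open>prime q\<close>] \<open>k < q\<close> by simp
  ultimately have "coprime (q ^ 2) (fact k * (n choose k))"
    using \<open>prime q\<close> by (simp add: prime_imp_coprime prime_dvd_mult_iff)
  moreover have "q ^ 2 dvd fact (n - k) * (fact k * (n choose k))"
    using binomial_fact_lemma[of k n] prime_square_dvd_fact[OF assms(1,2)] assms(2,3)
    by (simp add: ac_simps)
  ultimately have "q ^ 2 dvd fact (n - k)"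
    using coprime_dvd_mult_left_iff by blast
  then show False
    using prime_square_not_dvd_fact[OF \<open>prime q\<close> \<open>n - k < 2 * q\<close>] by contradiction
qed

lemma prime_dvd_choose_if_far_from_middle:
  fixes q n k :: nat
  assumes "prime q" "2 * q \<le> n" "k \<le> n"
    and "n - 2 * q < k" "n - 2 * q < n - k"
    and "int n - 2 * int q < \<bar>2 * int k - int n\<bar>"
  shows "q dvd (n choose k)"
proof -
  consider "k < q" | "n - k < q"
    using assms(2,3,6) by linarith
  then show ?thesis
  proof cases
    case 1
    then show ?thesis
      using prime_dvd_choose_if_index_below[OF assms(1,2)] assms(4) by simp
  next
    case 2
    then have "q dvd (n choose (n - k))"
      using prime_dvd_choose_if_index_below[OF assms(1,2)] assms(3,5) by simp
    then show ?thesis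
      using binomial_symmetric[OF \<open>k \<le> n\<close>] by simp
  qed
qed

lemma dvd_index_imp_far_from_middle:
  fixes d n k :: nat
  assumes "odd n" "d dvd n" "d dvd k"
  shows "int d \<le> \<bar>2 * int k - int n\<bar>"
proof -
  have "int d dvd 2 * int k - int n"
    using assms(2,3) by simp
  moreover have "2 * int k - int n \<noteq> 0"
    using \<open>odd n\<close> by presburger
  ultimately show ?thesis
    using dvd_imp_le_int by (metis abs_of_nat)
qed

theorem mainTheorem9:
  fixes n p a q :: nat
  assumes "odd n" and "n > 0"
    and "prime p" and "a \<ge> 1" and "p ^ a dvd n"
    and "prime q"
    and "real n / 3 < real q" and "real q < real n / 2"
    and "int n - 2 * int q < int (p ^ a)"
  shows "\<forall>k. 1 \<le> k \<and> k \<le> n - 1 \<longrightarrow> p dvd (n choose k) \<or> q dvd (n choose k)"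
proof (intro allI impI)
  fix k assume k: "1 \<le> k \<and> k \<le> n - 1"
  define d where "d = p ^ a"
  have "2 * q \<le> n" and "n < 2 * q + d"
    using assms(8,9) unfolding d_def by linarith+
  show "p dvd (n choose k) \<or> q dvd (n choose k)"
  proof (cases "p dvd (n choose k)")
    case False
    then have "d dvd k"
      using prime_power_dvd_index_if_not_dvd_choose[OF \<open>prime p\<close> \<open>p ^ a dvd n\<close>] k
      unfolding d_def by simp
    moreover have "d dvd n"
      using \<open>p ^ a dvd n\<close> unfolding d_def .
    ultimately have "d \<le> k" "d \<le> n - k" "int d \<le> \<bar>2 * int k - int n\<bar>"
      using k dvd_imp_le dvd_diff_nat dvd_index_imp_far_from_middle[OF \<open>odd n\<close>] by auto
    with \<open>n < 2 * q + d\<close> k have "q dvd (n choose k)"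
      by (intro prime_dvd_choose_if_far_from_middle[OF \<open>prime q\<close> \<open>2 * q \<le> n\<close>]) linarith+
    then show ?thesis ..
  qed simp
qed

end
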